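(* Let $n\in\mathbb{N}$, $H\in\mathbb{R}^{n\times n}$, $W\in\mathbb{R}^{n\times n}$ with $W\succ 0$, let $C=\mathrm{diag}(C_{11},\dots,C_{nn})$ be diagonal with all $C_{ii}\neq 0$, and let $V=\mathrm{diag}(\sigma_1^2,\dots,\sigma_n^2)$ with all $\sigma_i>0$. Assume $(H,C)$ is observable and $(H,D)$ is controllable, where $W=DD^T$. Let $\Sigma$ be the unique positive semidefinite solution of $$\Sigma = H\Sigma H^T - H\Sigma C^T(C\Sigma C^T+V)^{-1}C\Sigma H^T + W ,$$ and let $\overline{\Sigma}:=\Sigma-\Sigma C^T(C\Sigma C^T+V)^{-1}C\Sigma=(C^TV^{-1}C+\Sigma^{-1})^{-1}$. Then $$n\ln\!\left(\frac{\sigma_u^2}{C_u^2+\sigma_u^2\lambda_n(W)^{-1}}\right)\;\le\;\ln\det\overline{\Sigma}\;\le\; n\ln\!\left(\frac{\sigma_l^2}{C_l^2}\right).$$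
   Context: $\Sigma$ and $\overline\Sigma$ are the steady-state a priori and a posteriori error covariances of a Kalman filter for $x(k+1)=Hx(k)+w(k)$, $w(k)\sim\mathcal N(0,W)$, with privatized measurements $Cx(k)+v(k)$, $v(k)\sim\mathcal N(0,V)$. For a symmetric matrix $K$, $\lambda_n(K)\le\dots\le\lambda_1(K)$ denote its eigenvalues. Indices: $l:=\arg\min_{1\le i\le n} C_{ii}^2/\sigma_i^2$ and $u:=\arg\max_{1\le i\le n} C_{ii}^2/\sigma_i^2$; $C_l:=C_{ll}$, $C_u:=C_{uu}$, and $\sigma_l,\sigma_u$ are the corresponding $\sigma_i$. *)

theory Defs
  imports "HOL-Analysis.Analysis"
begin

definition symmetric_mat :: "real^'n^'n \<Rightarrow> bool" where
  "symmetric_mat A \<longleftrightarrow> transpose A = A"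

definition psd_mat :: "real^'n^'n \<Rightarrow> bool" where
  "psd_mat A \<longleftrightarrow> symmetric_mat A \<and> (\<forall>x. 0 \<le> x \<bullet> (A *v x))"

definition pd_mat :: "real^'n^'n \<Rightarrow> bool" where
  "pd_mat A \<longleftrightarrow> symmetric_mat A \<and> (\<forall>x. x \<noteq> 0 \<longrightarrow> 0 < x \<bullet> (A *v x))"

definition diag_mat :: "('n \<Rightarrow> real) \<Rightarrow> real^'n^'n" where
  "diag_mat d = (\<chi> i j. if i = j then d i else 0)"

definition is_diagonal :: "real^'n^'n \<Rightarrow> bool" where
  "is_diagonal A \<longleftrightarrow> (\<forall>i j. i \<noteq> j \<longrightarrow> A $ i $ j = 0)"

definition mat_pow :: "real^'n^'n \<Rightarrow> nat \<Rightarrow> real^'n^'n" where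
  "mat_pow A k = ((\<lambda>M. A ** M) ^^ k) (mat 1)"

text \<open>Observability of (H,C): the observability matrix [C; CH; ...; CH^(n-1)]
  has full column rank n, i.e. trivial kernel.\<close>
definition observable :: "real^'n^'n \<Rightarrow> real^'n^'p \<Rightarrow> bool" where
  "observable H C \<longleftrightarrow>
     (\<forall>x. (\<forall>k < CARD('n). (C ** mat_pow H k) *v x = 0) \<longrightarrow> x = 0)"

text \<open>Controllability of (H,D): the controllability matrix [D, HD, ..., H^(n-1) D]
  has full row rank n (duality with observability).\<close>
definition controllable :: "real^'n^'n \<Rightarrow> real^'m^'n \<Rightarrow> bool" where
  "controllable H D \<longleftrightarrow> observable (transpose H) (transpose D)"

text \<open>Smallest eigenvalue (for a symmetric matrix all eigenvalues are real).\<close>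
definition lambda_min :: "real^'n^'n \<Rightarrow> real" where
  "lambda_min A = Min {c. \<exists>v. v \<noteq> 0 \<and> A *v v = c *\<^sub>R v}"

end

theory Submission
  imports Defs
begin

text \<open>
  Write \<open>\<Sigma>bar\<close> for the posterior covariance. By the matrix inversion lemma
  \<open>\<Sigma>bar\<^sup>-\<^sup>1 = C\<^sup>T V\<^sup>-\<^sup>1 C + \<Sigma>\<^sup>-\<^sup>1\<close>, and for diagonal \<open>C\<close> and \<open>V\<close> the first summand is
  \<open>diag (C\<^sub>i\<^sub>i\<^sup>2 / \<sigma>\<^sub>i\<^sup>2)\<close>. Rewriting the Riccati equation as \<open>\<Sigma> = H \<Sigma>bar H\<^sup>T + W\<close> with
  \<open>\<Sigma>bar \<succeq> 0\<close> gives \<open>\<Sigma> \<succeq> W \<succeq> \<lambda>\<^sub>n(W) I\<close>, hence \<open>0 \<preceq> \<Sigma>\<^sup>-\<^sup>1 \<preceq> \<lambda>\<^sub>n(W)\<^sup>-\<^sup>1 I\<close>. So the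
  quadratic form of \<open>\<Sigma>bar\<^sup>-\<^sup>1\<close> lies between \<open>C\<^sub>l\<^sup>2/\<sigma>\<^sub>l\<^sup>2\<close> and
  \<open>C\<^sub>u\<^sup>2/\<sigma>\<^sub>u\<^sup>2 + \<lambda>\<^sub>n(W)\<^sup>-\<^sup>1\<close> times \<open>|x|\<^sup>2\<close>; diagonalising it in an orthonormal
  eigenbasis bounds its determinant by the \<open>n\<close>-th powers of these constants, and taking
  logarithms of \<open>det \<Sigma>bar = (det \<Sigma>bar\<^sup>-\<^sup>1)\<^sup>-\<^sup>1\<close> gives the claim.
\<close>

section \<open>Matrices and quadratic forms\<close>

lemma inner_transpose_mult_vec: "(transpose A *v x) \<bullet> y = x \<bullet> ((A::real^'n^'m) *v y)"
  by (simp add: dot_lmul_matrix)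

lemma symmetric_mat_inner:
  assumes "symmetric_mat A"
  shows "(A *v x) \<bullet> y = x \<bullet> ((A::real^'n^'n) *v y)"
proof -
  have "(A *v x) \<bullet> y = (transpose A *v x) \<bullet> y" using assms by (simp add: symmetric_mat_def)
  then show ?thesis by (simp only: inner_transpose_mult_vec)
qed

lemma transpose_add: "transpose (A + B) = transpose A + transpose (B :: real^'n^'m)"
  by (simp add: transpose_def vec_eq_iff)

lemma transpose_diff: "transpose (A - B) = transpose A - transpose (B :: real^'n^'m)"
  by (simp add: transpose_def vec_eq_iff)

lemma matrix_mul_diff_distrib:
  fixes M :: "real^'n^'m" and A B :: "real^'n^'n" and N :: "real^'k^'n"
  shows "M ** (A - B) ** N = M ** A ** N - M ** B ** N"
  by (simp add: matrix_eq matrix_vector_mul_assoc[symmetric] matrix_vector_mult_diff_rdistrib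
      matrix_vector_mult_diff_distrib)

lemma symmetric_mat_add: "symmetric_mat A \<Longrightarrow> symmetric_mat B \<Longrightarrow> symmetric_mat (A + B)"
  by (simp add: symmetric_mat_def transpose_add)

lemma symmetric_mat_congruence:
  "symmetric_mat A \<Longrightarrow> symmetric_mat (M ** A ** transpose (M :: real^'n^'m))"
  by (simp add: symmetric_mat_def matrix_transpose_mul matrix_mul_assoc)

lemma quadratic_form_congruence:
  "x \<bullet> ((M ** A ** transpose M) *v x) = (transpose M *v x) \<bullet> (A *v (transpose M *v x))"
  for M :: "real^'n^'m" and A :: "real^'n^'n"
  by (simp only: matrix_vector_mul_assoc[symmetric] inner_transpose_mult_vec)

lemma invertible_matrix_inv:
  fixes A :: "real^'n^'n"
  assumes "invertible A"
  shows "A ** matrix_inv A = mat 1" "matrix_inv A ** A = mat 1"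
proof -
  have "A ** matrix_inv A = mat 1 \<and> matrix_inv A ** A = mat 1"
    using assms unfolding invertible_def matrix_inv_def by (rule someI_ex)
  then show "A ** matrix_inv A = mat 1" "matrix_inv A ** A = mat 1" by auto
qed

lemma symmetric_mat_matrix_inv:
  fixes A :: "real^'n^'n"
  assumes sym: "symmetric_mat A" and inv: "invertible A"
  shows "symmetric_mat (matrix_inv A)"
proof -
  let ?B = "matrix_inv A"
  have "A ** transpose ?B = mat 1"
    using arg_cong[OF invertible_matrix_inv(2)[OF inv], of transpose] sym
    by (simp add: matrix_transpose_mul symmetric_mat_def)
  then have "transpose ?B = (?B ** A) ** transpose ?B"
    by (simp add: invertible_matrix_inv[OF inv] matrix_mul_assoc)
  also have "\<dots> = ?B"
    by (simp add: \<open>A ** transpose ?B = mat 1\<close> matrix_mul_assoc[symmetric])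
  finally show ?thesis by (simp add: symmetric_mat_def)
qed

lemma pd_mat_quadratic_form_nonneg: "pd_mat A \<Longrightarrow> 0 \<le> x \<bullet> (A *v x)"
  by (cases "x = 0") (auto simp: pd_mat_def less_imp_le)

lemma pd_mat_invertible:
  fixes A :: "real^'n^'n"
  assumes "pd_mat A"
  shows "invertible A"
proof -
  have "A *v x = 0 \<Longrightarrow> x = 0" for x
    using assms by (auto simp: pd_mat_def)
  then show ?thesis
    using matrix_left_invertible_ker invertible_left_inverse by blast
qed

lemma pd_mat_of_quadratic_form_ge:
  fixes A :: "real^'n^'n"
  assumes "symmetric_mat A" "0 < c" "\<And>x. c * (norm x)\<^sup>2 \<le> x \<bullet> (A *v x)"
  shows "pd_mat A"
  unfolding pd_mat_def
proof (intro conjI allI impI)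
  fix x :: "real^'n" assume "x \<noteq> 0"
  then have "0 < c * (norm x)\<^sup>2" using assms(2) by simp
  then show "0 < x \<bullet> (A *v x)" using assms(3)[of x] by linarith
qed (rule assms(1))

lemma quadratic_form_matrix_inv_le:
  fixes A :: "real^'n^'n"
  assumes sym: "symmetric_mat A" and c: "0 < c" and lo: "\<And>x. c * (norm x)\<^sup>2 \<le> x \<bullet> (A *v x)"
  shows "0 \<le> x \<bullet> (matrix_inv A *v x) \<and> x \<bullet> (matrix_inv A *v x) \<le> (norm x)\<^sup>2 / c"
proof -
  have "invertible A" using pd_mat_invertible pd_mat_of_quadratic_form_ge assms by blast
  define y where "y = matrix_inv A *v x"
  have Ay: "A *v y = x"
    by (simp add: y_def matrix_vector_mul_assoc invertible_matrix_inv(1)[OF \<open>invertible A\<close>])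
  define q where "q = y \<bullet> (A *v y)"
  have qx: "x \<bullet> (matrix_inv A *v x) = q"
    using Ay by (simp add: q_def y_def inner_commute)
  have q_lo: "c * (norm y)\<^sup>2 \<le> q" using lo by (simp add: q_def)
  have q0: "0 \<le> q" using q_lo c by (meson less_imp_le mult_nonneg_nonneg order_trans zero_le_power2)
  have "q \<le> norm x * norm y"
    using norm_cauchy_schwarz[of y "A *v y"] Ay by (simp add: q_def mult.commute)
  then have "q * q \<le> (norm x)\<^sup>2 * (norm y)\<^sup>2"
    using q0 mult_mono[of q "norm x * norm y" q "norm x * norm y"] by (simp add: power2_eq_square mult_ac)
  also have "\<dots> \<le> (norm x)\<^sup>2 * (q / c)"
    using q_lo c by (intro mult_left_mono) (simp_all add: pos_le_divide_eq mult.commute)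
  finally have "q * q \<le> (norm x)\<^sup>2 / c * q" by simp
  then have "q \<le> (norm x)\<^sup>2 / c"
    using q0 c by (cases "q = 0") (simp, metis mult_right_le_imp_le order_le_less)
  with q0 qx show ?thesis by simp
qed

section \<open>Diagonal matrices\<close>

lemma diag_mat_mult_vec: "diag_mat d *v x = (\<chi> i. d i * x $ i)"
proof -
  have "(\<Sum>j\<in>UNIV. (if i = j then d i else 0) * x $ j) = (\<Sum>j\<in>UNIV. if i = j then d i * x $ j else 0)"
    for i by (rule sum.cong) auto
  then show ?thesis by (simp add: diag_mat_def matrix_vector_mult_def vec_eq_iff)
qed

lemma diag_mat_mult: "diag_mat a ** diag_mat b = diag_mat (\<lambda>i. a i * b i)"
  by (simp add: matrix_eq matrix_vector_mul_assoc[symmetric] diag_mat_mult_vec mult.assoc)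

lemma diag_mat_mult_inverse:
  assumes "\<And>i. d i \<noteq> 0"
  shows "diag_mat d ** diag_mat (\<lambda>i. inverse (d i)) = mat 1"
proof -
  have "(\<lambda>i. d i * inverse (d i)) = (\<lambda>_. 1)" using assms by simp
  then show ?thesis unfolding diag_mat_mult by (simp add: diag_mat_def mat_def)
qed

lemma quadratic_form_diag_mat: "x \<bullet> (diag_mat d *v x) = (\<Sum>i\<in>UNIV. d i * (x $ i)\<^sup>2)"
  by (simp add: diag_mat_mult_vec inner_vec_def power2_eq_square mult_ac)

lemma symmetric_diag_mat: "symmetric_mat (diag_mat d)"
  by (simp add: symmetric_mat_def diag_mat_def transpose_def vec_eq_iff)

lemma transpose_diag_mat_mult_diag_mat:
  "transpose (diag_mat d) ** diag_mat w ** diag_mat d = diag_mat (\<lambda>i. (d i)\<^sup>2 * w i)"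
  using symmetric_diag_mat[of d]
  by (simp add: symmetric_mat_def diag_mat_mult power2_eq_square mult_ac)

lemma is_diagonal_eq_diag_mat: "is_diagonal C \<Longrightarrow> C = diag_mat (\<lambda>i. C $ i $ i)"
  by (auto simp: is_diagonal_def diag_mat_def vec_eq_iff)

lemma quadratic_form_diag_mat_bounds:
  assumes "\<And>i. c \<le> d i" "\<And>i. d i \<le> r"
  shows "c * (norm x)\<^sup>2 \<le> x \<bullet> (diag_mat d *v x)" "x \<bullet> (diag_mat d *v x) \<le> r * (norm x)\<^sup>2"
proof -
  have norm_sq: "(norm x)\<^sup>2 = (\<Sum>i\<in>UNIV. (x $ i)\<^sup>2)"
    unfolding power2_norm_eq_inner by (simp add: inner_vec_def power2_eq_square)
  show "c * (norm x)\<^sup>2 \<le> x \<bullet> (diag_mat d *v x)" "x \<bullet> (diag_mat d *v x) \<le> r * (norm x)\<^sup>2"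
    unfolding quadratic_form_diag_mat norm_sq sum_distrib_left
    using assms by (auto intro!: sum_mono mult_right_mono)
qed

lemma pd_diag_mat:
  fixes d :: "'n::finite \<Rightarrow> real"
  assumes "\<And>i. 0 < d i"
  shows "pd_mat (diag_mat d)"
  unfolding pd_mat_def
proof (intro conjI allI impI symmetric_diag_mat)
  fix x :: "real^'n" assume "x \<noteq> 0"
  then obtain i where "x $ i \<noteq> 0" by (auto simp: vec_eq_iff)
  then show "0 < x \<bullet> (diag_mat d *v x)"
    unfolding quadratic_form_diag_mat using assms
    by (intro sum_pos2[of UNIV i]) (simp_all add: less_imp_le)
qed

section \<open>Eigenvalues and determinants of symmetric matrices\<close>

lemma linear_coeff_zero_of_nonneg_quadratic:
  fixes a b :: real
  assumes "\<And>t. 0 \<le> 2*t*a + t\<^sup>2*b"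
  shows "a = 0"
proof -
  define k where "k = \<bar>b\<bar> + 1"
  have k: "k > 0" "b \<le> k" by (auto simp: k_def)
  have "0 \<le> k\<^sup>2 * (2*(-a/k)*a + (-a/k)\<^sup>2*b)" using assms[of "-a/k"] by simp
  also have "\<dots> = -2*a*a*k + a*a*b" using k by (simp add: field_simps power2_eq_square)
  also have "\<dots> \<le> - (a*a) * k" using mult_left_mono[OF k(2), of "a*a"] by simp
  finally have "a*a \<le> 0" using k by (simp add: mult_le_0_iff zero_le_mult_iff)
  then show ?thesis by (metis antisym mult_eq_0_iff zero_le_square)
qed

lemma quadratic_form_add_scaleR:
  fixes A :: "real^'n^'n"
  assumes "symmetric_mat A"
  shows "(v + t *\<^sub>R y) \<bullet> (A *v (v + t *\<^sub>R y))
           = v \<bullet> (A *v v) + 2*t*(y \<bullet> (A *v v)) + t\<^sup>2 * (y \<bullet> (A *v y))"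
proof -
  have "v \<bullet> (A *v y) = y \<bullet> (A *v v)"
    using symmetric_mat_inner[OF assms, of y v] by (simp add: inner_commute)
  then show ?thesis
    by (simp add: power2_eq_square algebra_simps)
qed

text \<open>A minimiser of the Rayleigh quotient over the unit sphere of an invariant subspace
  is an eigenvector: the first variation along any direction of the subspace vanishes.\<close>

lemma symmetric_mat_min_rayleigh_eigenvector:
  fixes A :: "real^'n^'n"
  assumes sym: "symmetric_mat A" and S: "subspace S" and ne: "\<exists>x\<in>S. x \<noteq> 0"
    and inv: "\<forall>x\<in>S. A *v x \<in> S"
  obtains v where "v \<in> S" "norm v = 1" "A *v v = (v \<bullet> (A *v v)) *\<^sub>R v"
    "\<And>x. x \<in> S \<Longrightarrow> (v \<bullet> (A *v v)) * (norm x)\<^sup>2 \<le> x \<bullet> (A *v x)"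
proof -
  let ?T = "S \<inter> sphere 0 1"
  have compact_T: "compact ?T" using S by (intro closed_Int_compact closed_subspace compact_sphere)
  obtain x0 where x0: "x0 \<in> S" "x0 \<noteq> 0" using ne by blast
  have "(1/norm x0) *\<^sub>R x0 \<in> ?T" using x0 S by (simp add: subspace_scale)
  then have ne_T: "?T \<noteq> {}" by blast
  have "continuous_on ?T (\<lambda>x. x \<bullet> (A *v x))"
    by (intro continuous_intros linear_continuous_on) (auto intro: bounded_linearI')
  then obtain v where v: "v \<in> ?T" and vmin: "\<forall>y\<in>?T. v \<bullet> (A *v v) \<le> y \<bullet> (A *v y)"
    using continuous_attains_inf[OF compact_T ne_T] by blast
  define m where "m = v \<bullet> (A *v v)"
  have vS: "v \<in> S" and nv: "norm v = 1" using v by auto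
  have bound: "m * (norm x)\<^sup>2 \<le> x \<bullet> (A *v x)" if "x \<in> S" for x
  proof (cases "x = 0")
    case False
    have "(1/norm x) *\<^sub>R x \<in> ?T" using that False S by (simp add: subspace_scale)
    then have "m \<le> ((1/norm x) *\<^sub>R x) \<bullet> (A *v ((1/norm x) *\<^sub>R x))" using vmin m_def by blast
    also have "\<dots> = (x \<bullet> (A *v x)) / (norm x)\<^sup>2"
      by (simp add: matrix_vector_mult_scaleR power2_eq_square)
    finally show ?thesis using False by (simp add: pos_le_divide_eq)
  qed simp
  have "y \<bullet> (A *v v - m *\<^sub>R v) = 0" if "y \<in> S" for y
  proof (rule linear_coeff_zero_of_nonneg_quadratic)
    fix t
    have "v + t *\<^sub>R y \<in> S" using vS that S by (simp add: subspace_add subspace_scale)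
    then have "m * (norm (v + t *\<^sub>R y))\<^sup>2 \<le> (v + t *\<^sub>R y) \<bullet> (A *v (v + t *\<^sub>R y))" by (rule bound)
    moreover have "(norm (v + t *\<^sub>R y))\<^sup>2 = v \<bullet> v + 2*t*(v \<bullet> y) + t\<^sup>2 * (y \<bullet> y)"
      unfolding power2_norm_eq_inner by (simp add: inner_commute power2_eq_square algebra_simps)
    ultimately show "0 \<le> 2*t*(y \<bullet> (A *v v - m *\<^sub>R v)) + t\<^sup>2*(y \<bullet> (A *v y) - m * (norm y)\<^sup>2)"
      using nv unfolding quadratic_form_add_scaleR[OF sym] m_def[symmetric]
      by (simp add: algebra_simps inner_commute flip: power2_norm_eq_inner)
  qed
  moreover have "A *v v - m *\<^sub>R v \<in> S" using vS S inv by (simp add: subspace_diff subspace_scale)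
  ultimately have "A *v v = m *\<^sub>R v" by (metis inner_eq_zero_iff eq_iff_diff_eq_0)
  then show ?thesis using that vS nv bound m_def by blast
qed

lemma dim_subspace_orthogonal_unit:
  fixes v :: "'a::euclidean_space"
  assumes S: "subspace S" and vS: "v \<in> S" and nv: "norm v = 1"
  shows "dim S = dim {x\<in>S. v \<bullet> x = 0} + 1"
proof -
  define S' where "S' = {x\<in>S. v \<bullet> x = 0}"
  have sub': "subspace S'" using S unfolding S'_def subspace_def by (auto simp: inner_add_right)
  have "v \<notin> S'" using nv by (auto simp: S'_def power2_norm_eq_inner[symmetric])
  then have v_notin: "v \<notin> span S'" using sub' by (metis span_eq_iff)
  have "span (insert v S') = S"
  proof
    show "span (insert v S') \<subseteq> S"
      using vS S by (intro span_minimal) (auto simp: S'_def)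
    show "S \<subseteq> span (insert v S')"
    proof
      fix x assume xS: "x \<in> S"
      have "x - (v \<bullet> x) *\<^sub>R v \<in> S'"
        using xS vS S nv
        by (auto simp: S'_def subspace_diff subspace_scale inner_diff_right power2_norm_eq_inner[symmetric])
      then have "(x - (v \<bullet> x) *\<^sub>R v) + (v \<bullet> x) *\<^sub>R v \<in> span (insert v S')"
        by (intro span_add) (simp_all add: span_base span_mul)
      then show "x \<in> span (insert v S')" by simp
    qed
  qed
  then show ?thesis
    unfolding S'_def[symmetric] using v_notin dim_insert[of v S'] by (metis dim_span)
qed

lemma symmetric_mat_orthonormal_eigenbasis:
  fixes A :: "real^'n^'n"
  assumes sym: "symmetric_mat A"
  shows "subspace S \<Longrightarrow> (\<forall>x\<in>S. A *v x \<in> S) \<Longrightarrow>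
    \<exists>B. B \<subseteq> S \<and> finite B \<and> card B = dim S \<and> pairwise orthogonal B \<and>
        (\<forall>b\<in>B. norm b = 1 \<and> (\<exists>\<mu>. A *v b = \<mu> *\<^sub>R b))"
proof (induction "dim S" arbitrary: S rule: less_induct)
  case (less S)
  show ?case
  proof (cases "\<exists>x\<in>S. x \<noteq> 0")
    case False
    then have "S \<subseteq> {0}" by auto
    then have "dim S = 0" by simp
    then show ?thesis by (intro exI[of _ "{}"]) auto
  next
    case True
    obtain v where vS: "v \<in> S" and nv: "norm v = 1" and ev: "A *v v = (v \<bullet> (A *v v)) *\<^sub>R v"
      using symmetric_mat_min_rayleigh_eigenvector[OF sym less.prems(1) True less.prems(2)] by blast
    define S' where "S' = {x\<in>S. v \<bullet> x = 0}"
    have sub': "subspace S'" using less.prems(1) unfolding S'_def subspace_def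
      by (auto simp: inner_add_right)
    have inv': "\<forall>x\<in>S'. A *v x \<in> S'"
    proof
      fix x assume x: "x \<in> S'"
      have "v \<bullet> (A *v x) = (v \<bullet> (A *v v)) * (v \<bullet> x)"
        using symmetric_mat_inner[OF sym, of v x] ev by (metis inner_scaleR_left)
      then show "A *v x \<in> S'" using x less.prems(2) by (auto simp: S'_def)
    qed
    have v_notin: "v \<notin> S'" using nv by (auto simp: S'_def power2_norm_eq_inner[symmetric])
    have dimS: "dim S = dim S' + 1"
      unfolding S'_def using less.prems(1) vS nv by (rule dim_subspace_orthogonal_unit)
    then obtain B' where B': "B' \<subseteq> S'" "finite B'" "card B' = dim S'" "pairwise orthogonal B'"
        "\<forall>b\<in>B'. norm b = 1 \<and> (\<exists>\<mu>. A *v b = \<mu> *\<^sub>R b)"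
      using less.hyps[of S'] sub' inv' by auto
    have "v \<notin> B'" using B'(1) v_notin by blast
    then show ?thesis
      using B' vS nv ev dimS
      by (intro exI[of _ "insert v B'"])
         (auto simp: S'_def pairwise_insert orthogonal_def inner_commute)
  qed
qed

lemma congruence_entry_by_columns:
  fixes M :: "real^'n^'n" and g :: "'n \<Rightarrow> real^'n"
  defines "Q \<equiv> (\<chi> i j. g j $ i)"
  shows "(transpose Q ** M ** Q) $ j $ k = g j \<bullet> (M *v g k)"
proof -
  have "(transpose Q ** M ** Q) $ j $ k = (\<Sum>l\<in>UNIV. \<Sum>i\<in>UNIV. g j $ i * (M $ i $ l * g k $ l))"
    by (simp add: Q_def matrix_matrix_mult_def transpose_def sum_distrib_right mult.assoc)
  also have "\<dots> = (\<Sum>i\<in>UNIV. g j $ i * (\<Sum>l\<in>UNIV. M $ i $ l * g k $ l))"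
    by (subst sum.swap) (simp add: sum_distrib_left)
  also have "\<dots> = g j \<bullet> (M *v g k)"
    by (simp add: inner_vec_def matrix_vector_mult_def)
  finally show ?thesis .
qed

text \<open>In an orthonormal eigenbasis the determinant is the product of the diagonal values
  of the quadratic form, each of which lies between the two bounds.\<close>

lemma det_bounds_of_quadratic_form_bounds:
  fixes A :: "real^'n^'n"
  assumes sym: "symmetric_mat A" and c0: "0 \<le> c"
    and lo: "\<And>x. c * (norm x)\<^sup>2 \<le> x \<bullet> (A *v x)"
    and hi: "\<And>x. x \<bullet> (A *v x) \<le> r * (norm x)\<^sup>2"
  shows "c ^ CARD('n) \<le> det A" "det A \<le> r ^ CARD('n)"
proof -
  obtain B where B: "finite B" "card B = CARD('n)" "pairwise orthogonal B"
      "\<forall>b\<in>B. norm b = 1 \<and> (\<exists>\<mu>. A *v b = \<mu> *\<^sub>R b)"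
    using symmetric_mat_orthonormal_eigenbasis[OF sym, of UNIV] by auto
  then obtain g where g: "bij_betw g (UNIV::'n set) B"
    using finite_same_card_bij[of "UNIV::'n set" B] by auto
  have gB: "g j \<in> B" for j using g by (auto simp: bij_betw_def)
  have orth: "g j \<bullet> g k = 0" if "j \<noteq> k" for j k
    using B(3) gB g that by (metis bij_betw_def inj_def orthogonal_def pairwise_def)
  have unit: "g j \<bullet> g j = 1" for j using B(4) gB by (metis norm_eq_1)
  define Q where "Q = (\<chi> i j. g j $ i)"
  have "transpose Q ** mat 1 ** Q = mat 1"
    by (simp only: vec_eq_iff Q_def congruence_entry_by_columns matrix_vector_mul_lid)
       (auto simp: mat_def orth unit)
  then have detQ: "det (transpose Q) * det Q = 1"
    by (metis det_I det_mul matrix_mul_rid)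
  have off_diag: "(transpose Q ** A ** Q) $ j $ k = 0" if "j \<noteq> k" for j k
  proof -
    obtain \<mu> where "A *v g k = \<mu> *\<^sub>R g k" using B(4) gB by blast
    then show ?thesis using orth[OF that] by (simp add: Q_def congruence_entry_by_columns)
  qed
  have "det A = det (transpose Q) * det A * det Q" using detQ by (simp add: algebra_simps)
  also have "\<dots> = det (transpose Q ** A ** Q)" by (simp add: det_mul)
  also have "\<dots> = (\<Prod>j\<in>UNIV. g j \<bullet> (A *v g j))"
    using off_diag by (subst det_diagonal) (auto simp: Q_def congruence_entry_by_columns)
  finally have detA: "det A = (\<Prod>j\<in>UNIV. g j \<bullet> (A *v g j))" .
  have "(norm (g j))\<^sup>2 = 1" for j using unit by (simp add: power2_norm_eq_inner)
  then have bounds: "c \<le> g j \<bullet> (A *v g j)" "g j \<bullet> (A *v g j) \<le> r" for j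
    using lo[of "g j"] hi[of "g j"] by simp_all
  have "(\<Prod>j\<in>(UNIV::'n set). c) \<le> det A"
    unfolding detA using bounds c0 by (intro prod_mono) auto
  then show "c ^ CARD('n) \<le> det A" by simp
  have "det A \<le> (\<Prod>j\<in>(UNIV::'n set). r)"
    unfolding detA using bounds c0 by (intro prod_mono) (auto intro: order_trans)
  then show "det A \<le> r ^ CARD('n)" by simp
qed

lemma ln_det_bounds_of_inverse:
  fixes A B :: "real^'n^'n"
  assumes AB: "A ** B = mat 1" and sym: "symmetric_mat B" and c: "0 < c"
    and lo: "\<And>x. c * (norm x)\<^sup>2 \<le> x \<bullet> (B *v x)" and hi: "\<And>x. x \<bullet> (B *v x) \<le> r * (norm x)\<^sup>2"
  shows "real CARD('n) * ln (inverse r) \<le> ln (det A)" "ln (det A) \<le> real CARD('n) * ln (inverse c)"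
proof -
  have "c \<le> r" using lo[of "axis undefined 1"] hi[of "axis undefined 1"] by simp
  with c have r: "0 < r" by linarith
  have detB: "c ^ CARD('n) \<le> det B" "det B \<le> r ^ CARD('n)"
    using det_bounds_of_quadratic_form_bounds[OF sym less_imp_le[OF c] lo hi] by auto
  then have "0 < det B" using c by (meson order_less_le_trans zero_less_power)
  moreover have "det A * det B = 1" using AB by (metis det_I det_mul)
  ultimately have "det A = inverse (det B)" by (simp add: field_simps)
  then have "ln (det A) = - ln (det B)" using \<open>0 < det B\<close> by (simp add: ln_inverse)
  moreover have "real CARD('n) * ln c \<le> ln (det B)" "ln (det B) \<le> real CARD('n) * ln r"
    using detB c r \<open>0 < det B\<close> by (simp_all flip: ln_realpow)
  ultimately show "real CARD('n) * ln (inverse r) \<le> ln (det A)" "ln (det A) \<le> real CARD('n) * ln (inverse c)"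
    using c r by (simp_all add: ln_inverse)
qed

lemma finite_eigenvalues_symmetric_mat:
  fixes A :: "real^'n^'n"
  assumes sym: "symmetric_mat A"
  shows "finite {c. \<exists>v. v \<noteq> 0 \<and> A *v v = c *\<^sub>R v}"
proof -
  define E where "E = {c. \<exists>v. v \<noteq> 0 \<and> A *v v = c *\<^sub>R v}"
  define f where "f c = (SOME v. v \<noteq> 0 \<and> A *v v = c *\<^sub>R v)" for c
  have f: "f c \<noteq> 0 \<and> A *v f c = c *\<^sub>R f c" if "c \<in> E" for c
    using someI_ex[of "\<lambda>v. v \<noteq> 0 \<and> A *v v = c *\<^sub>R v"] that by (simp add: E_def f_def)
  have orth: "f c \<bullet> f d = 0" if "c \<in> E" "d \<in> E" "c \<noteq> d" for c d
  proof -
    have "c * (f c \<bullet> f d) = (A *v f c) \<bullet> f d" using f[OF that(1)] by simp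
    also have "\<dots> = f c \<bullet> (A *v f d)" by (rule symmetric_mat_inner[OF sym])
    also have "\<dots> = d * (f c \<bullet> f d)" using f[OF that(2)] by simp
    finally show ?thesis using that(3) by simp
  qed
  have inj: "inj_on f E"
  proof (rule inj_onI)
    fix c d assume c: "c \<in> E" and d: "d \<in> E" and eq: "f c = f d"
    have "c *\<^sub>R f c = A *v f c" using f[OF c] by simp
    also have "\<dots> = d *\<^sub>R f c" using f[OF d] eq by simp
    finally have "(c - d) *\<^sub>R f c = 0" by (simp add: scaleR_diff_left)
    then show "c = d" using f[OF c] by simp
  qed
  have "pairwise orthogonal (f ` E)"
    unfolding pairwise_def orthogonal_def
  proof (intro ballI impI)
    fix x y assume "x \<in> f ` E" "y \<in> f ` E" "x \<noteq> y"
    then obtain c d where "c \<in> E" "d \<in> E" "x = f c" "y = f d" "c \<noteq> d" by blast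
    then show "x \<bullet> y = 0" using orth by simp
  qed
  moreover have "0 \<notin> f ` E" using f by auto
  ultimately have "finite (f ` E)"
    using pairwise_orthogonal_independent independent_bound by blast
  then have "finite E" using inj by (rule finite_imageD)
  then show ?thesis by (simp only: E_def)
qed

lemma lambda_min_min_rayleigh:
  fixes A :: "real^'n^'n"
  assumes sym: "symmetric_mat A"
  obtains v where "norm v = 1" "lambda_min A = v \<bullet> (A *v v)"
    "\<And>x. lambda_min A * (norm x)\<^sup>2 \<le> x \<bullet> (A *v x)"
proof -
  have "\<exists>x\<in>(UNIV::(real^'n) set). x \<noteq> 0"
    by (rule bexI[of _ "axis undefined 1"]) auto
  then obtain v where nv: "norm v = 1" and ev: "A *v v = (v \<bullet> (A *v v)) *\<^sub>R v"
      and bound: "\<And>x. (v \<bullet> (A *v v)) * (norm x)\<^sup>2 \<le> x \<bullet> (A *v x)"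
    using symmetric_mat_min_rayleigh_eigenvector[OF sym subspace_UNIV] by auto
  define E where "E = {c. \<exists>v. v \<noteq> 0 \<and> A *v v = c *\<^sub>R v}"
  have "v \<noteq> 0" using nv by auto
  with ev have "v \<bullet> (A *v v) \<in> E" unfolding E_def by blast
  moreover have "v \<bullet> (A *v v) \<le> c" if c: "c \<in> E" for c
  proof -
    obtain x where x: "x \<noteq> 0" "A *v x = c *\<^sub>R x" using c unfolding E_def by blast
    have "(v \<bullet> (A *v v)) * (norm x)\<^sup>2 \<le> c * (norm x)\<^sup>2"
      using bound[of x] x by (simp add: power2_norm_eq_inner)
    then show ?thesis using x by simp
  qed
  moreover have "finite E" unfolding E_def by (rule finite_eigenvalues_symmetric_mat[OF sym])
  ultimately have "lambda_min A = v \<bullet> (A *v v)"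
    unfolding lambda_min_def E_def[symmetric] by (intro Min_eqI) auto
  with nv bound show ?thesis by (intro that) simp_all
qed

lemma lambda_min_le_quadratic_form:
  "symmetric_mat A \<Longrightarrow> lambda_min A * (norm x)\<^sup>2 \<le> x \<bullet> (A *v x)"
  using lambda_min_min_rayleigh by blast

lemma lambda_min_pos:
  assumes "pd_mat A"
  shows "0 < lambda_min A"
proof -
  have "symmetric_mat A" using assms by (simp add: pd_mat_def)
  then obtain v where "norm v = 1" "lambda_min A = v \<bullet> (A *v v)"
    by (rule lambda_min_min_rayleigh)
  moreover from \<open>norm v = 1\<close> have "v \<noteq> 0" by auto
  ultimately show ?thesis using assms by (simp add: pd_mat_def)
qed

section \<open>Kalman filter covariances\<close>

lemma innovation_covariance_pd:
  fixes \<Sigma> :: "real^'n^'n" and C :: "real^'n^'p" and V :: "real^'p^'p"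
  assumes \<Sigma>: "psd_mat \<Sigma>" and V: "pd_mat V"
  shows "pd_mat (C ** \<Sigma> ** transpose C + V)"
  unfolding pd_mat_def
proof (intro conjI allI impI symmetric_mat_add symmetric_mat_congruence)
  show "symmetric_mat \<Sigma>" "symmetric_mat V" using assms by (simp_all add: psd_mat_def pd_mat_def)
  fix x :: "real^'p" assume "x \<noteq> 0"
  then have "0 < x \<bullet> (V *v x)" using V by (simp add: pd_mat_def)
  moreover have "0 \<le> (transpose C *v x) \<bullet> (\<Sigma> *v (transpose C *v x))" using \<Sigma> by (simp add: psd_mat_def)
  ultimately show "0 < x \<bullet> ((C ** \<Sigma> ** transpose C + V) *v x)"
    by (simp add: matrix_vector_mult_add_rdistrib inner_add_right quadratic_form_congruence)
qed

text \<open>Completing the square: with \<open>w = S\<^sup>-\<^sup>1 C \<Sigma> x\<close> and \<open>p = C\<^sup>T w\<close>, the quadratic form of the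
  posterior covariance is \<open>(x - p)\<^sup>T \<Sigma> (x - p) + w\<^sup>T V w\<close>.\<close>

lemma posterior_covariance_psd:
  fixes \<Sigma> :: "real^'n^'n" and C :: "real^'n^'p" and V :: "real^'p^'p"
  assumes \<Sigma>: "psd_mat \<Sigma>" and V: "pd_mat V"
  shows "psd_mat (\<Sigma> - \<Sigma> ** transpose C ** matrix_inv (C ** \<Sigma> ** transpose C + V) ** C ** \<Sigma>)"
proof -
  define S where "S = C ** \<Sigma> ** transpose C + V"
  define Si where "Si = matrix_inv S"
  have S_pd: "pd_mat S" unfolding S_def using assms by (rule innovation_covariance_pd)
  have SSi: "S ** Si = mat 1" unfolding Si_def by (rule invertible_matrix_inv(1)[OF pd_mat_invertible[OF S_pd]])
  have Si_sym: "symmetric_mat Si"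
    unfolding Si_def using S_pd pd_mat_invertible symmetric_mat_matrix_inv by (auto simp: pd_mat_def)
  have \<Sigma>_sym: "symmetric_mat \<Sigma>" and \<Sigma>_nonneg: "\<And>x. 0 \<le> x \<bullet> (\<Sigma> *v x)"
    using \<Sigma> by (auto simp: psd_mat_def)
  have "symmetric_mat (\<Sigma> - \<Sigma> ** transpose C ** Si ** C ** \<Sigma>)"
    using \<Sigma>_sym Si_sym
    by (simp add: symmetric_mat_def transpose_diff matrix_transpose_mul matrix_mul_assoc)
  moreover have "0 \<le> x \<bullet> ((\<Sigma> - \<Sigma> ** transpose C ** Si ** C ** \<Sigma>) *v x)" for x
  proof -
    define w where "w = Si *v (C *v (\<Sigma> *v x))"
    define p where "p = transpose C *v w"
    have "x \<bullet> (\<Sigma> *v p) = w \<bullet> (C *v (\<Sigma> *v x))"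
      using symmetric_mat_inner[OF \<Sigma>_sym, of x p] inner_transpose_mult_vec[of C w "\<Sigma> *v x"]
      by (simp add: p_def inner_commute)
    also have "\<dots> = w \<bullet> (S *v w)"
      by (simp only: w_def matrix_vector_mul_assoc[of S Si] SSi matrix_vector_mul_lid)
    also have "\<dots> = p \<bullet> (\<Sigma> *v p) + w \<bullet> (V *v w)"
      unfolding S_def matrix_vector_mult_add_rdistrib inner_add_right quadratic_form_congruence p_def ..
    finally have cross: "x \<bullet> (\<Sigma> *v p) = p \<bullet> (\<Sigma> *v p) + w \<bullet> (V *v w)" .
    have "x \<bullet> ((\<Sigma> - \<Sigma> ** transpose C ** Si ** C ** \<Sigma>) *v x) = x \<bullet> (\<Sigma> *v x) - x \<bullet> (\<Sigma> *v p)"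
      by (simp add: p_def w_def matrix_vector_mult_diff_rdistrib matrix_vector_mul_assoc[symmetric]
          matrix_mul_assoc inner_diff_right)
    also have "\<dots> = (x - p) \<bullet> (\<Sigma> *v (x - p)) + w \<bullet> (V *v w)"
      using cross symmetric_mat_inner[OF \<Sigma>_sym, of p x]
      by (simp add: matrix_vector_mult_diff_distrib inner_diff_left inner_diff_right inner_commute)
    finally show ?thesis
      using \<Sigma>_nonneg[of "x - p"] pd_mat_quadratic_form_nonneg[OF V, of w] by linarith
  qed
  ultimately show ?thesis by (simp add: psd_mat_def S_def Si_def)
qed

lemma riccati_solution_ge_process_noise:
  fixes \<Sigma> H W :: "real^'n^'n" and C :: "real^'n^'p" and V :: "real^'p^'p"
  assumes \<Sigma>: "psd_mat \<Sigma>" and V: "pd_mat V"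
    and riccati: "\<Sigma> = H ** \<Sigma> ** transpose H
        - H ** \<Sigma> ** transpose C ** matrix_inv (C ** \<Sigma> ** transpose C + V) ** C ** \<Sigma> ** transpose H
        + W"
  shows "x \<bullet> (W *v x) \<le> x \<bullet> (\<Sigma> *v x)"
proof -
  define \<Sigma>bar where "\<Sigma>bar = \<Sigma> - \<Sigma> ** transpose C ** matrix_inv (C ** \<Sigma> ** transpose C + V) ** C ** \<Sigma>"
  have "\<Sigma> = H ** \<Sigma>bar ** transpose H + W"
    using riccati by (simp add: \<Sigma>bar_def matrix_mul_diff_distrib matrix_mul_assoc)
  moreover have "0 \<le> x \<bullet> ((H ** \<Sigma>bar ** transpose H) *v x)"
    using posterior_covariance_psd[OF assms(1,2)]
    by (simp add: quadratic_form_congruence \<Sigma>bar_def psd_mat_def)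
  ultimately show ?thesis
    by (metis le_add_same_cancel2 inner_add_right matrix_vector_mult_add_rdistrib)
qed

lemma posterior_covariance_mult_information:
  fixes \<Sigma> \<Sigma>i :: "real^'n^'n" and C :: "real^'n^'p" and V Vi :: "real^'p^'p"
  assumes S: "invertible (C ** \<Sigma> ** transpose C + V)" and V: "V ** Vi = mat 1"
    and \<Sigma>: "\<Sigma> ** \<Sigma>i = mat 1"
  shows "(\<Sigma> - \<Sigma> ** transpose C ** matrix_inv (C ** \<Sigma> ** transpose C + V) ** C ** \<Sigma>)
           ** (transpose C ** Vi ** C + \<Sigma>i) = mat 1"
proof -
  define S where "S = C ** \<Sigma> ** transpose C + V"
  define Si where "Si = matrix_inv S"
  have "(\<Sigma> - \<Sigma> ** transpose C ** Si ** C ** \<Sigma>) *v ((transpose C ** Vi ** C + \<Sigma>i) *v x) = x" for x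
  proof -
    define u where "u = Vi *v (C *v x)"
    define a where "a = transpose C *v u"
    have \<Sigma>b: "\<Sigma> *v (\<Sigma>i *v x) = x" using \<Sigma> by (simp add: matrix_vector_mul_assoc)
    have "S *v u = C *v (\<Sigma> *v a) + V *v u"
      by (simp only: S_def a_def matrix_vector_mult_add_rdistrib matrix_vector_mul_assoc[symmetric])
    also have "V *v u = C *v x" using V by (simp add: u_def matrix_vector_mul_assoc[of V Vi])
    finally have "C *v (\<Sigma> *v (a + \<Sigma>i *v x)) = S *v u"
      by (simp only: \<Sigma>b matrix_vector_right_distrib)
    then have Si_u: "Si *v (C *v (\<Sigma> *v (a + \<Sigma>i *v x))) = u"
      using invertible_matrix_inv(2)[OF S[folded S_def]]
      by (simp add: Si_def matrix_vector_mul_assoc[of "matrix_inv S" S])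
    have Bx: "(transpose C ** Vi ** C + \<Sigma>i) *v x = a + \<Sigma>i *v x"
      by (simp only: a_def u_def matrix_vector_mult_add_rdistrib matrix_vector_mul_assoc[symmetric])
    have \<Sigma>bar: "(\<Sigma> - \<Sigma> ** transpose C ** Si ** C ** \<Sigma>) *v y
            = \<Sigma> *v y - \<Sigma> *v (transpose C *v (Si *v (C *v (\<Sigma> *v y))))" for y
      by (simp only: matrix_vector_mult_diff_rdistrib matrix_vector_mul_assoc[symmetric])
    show ?thesis
      unfolding Bx \<Sigma>bar Si_u a_def[symmetric] by (simp add: matrix_vector_right_distrib \<Sigma>b)
  qed
  then show ?thesis
    by (simp add: matrix_eq matrix_vector_mul_assoc[symmetric] S_def Si_def)
qed

lemma posterior_covariance_diagonal_information:
  fixes \<Sigma> C :: "real^'n^'n" and sigma :: "'n \<Rightarrow> real"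
  assumes \<Sigma>: "psd_mat \<Sigma>" "invertible \<Sigma>" and C: "is_diagonal C" and sigma: "\<And>i. 0 < sigma i"
  defines "V \<equiv> diag_mat (\<lambda>i. (sigma i)\<^sup>2)"
  shows "(\<Sigma> - \<Sigma> ** transpose C ** matrix_inv (C ** \<Sigma> ** transpose C + V) ** C ** \<Sigma>)
           ** (diag_mat (\<lambda>i. (C $ i $ i)\<^sup>2 / (sigma i)\<^sup>2) + matrix_inv \<Sigma>) = mat 1"
proof -
  have "pd_mat V" unfolding V_def using sigma by (intro pd_diag_mat) (metis less_irrefl zero_less_power2)
  then have S: "invertible (C ** \<Sigma> ** transpose C + V)"
    using \<Sigma>(1) by (intro pd_mat_invertible innovation_covariance_pd)
  have V_inv: "V ** diag_mat (\<lambda>i. inverse ((sigma i)\<^sup>2)) = mat 1"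
    unfolding V_def using sigma by (intro diag_mat_mult_inverse) (metis less_irrefl power_not_zero)
  have info: "transpose C ** diag_mat (\<lambda>i. inverse ((sigma i)\<^sup>2)) ** C
      = diag_mat (\<lambda>i. (C $ i $ i)\<^sup>2 / (sigma i)\<^sup>2)"
    using transpose_diag_mat_mult_diag_mat[of "\<lambda>i. C $ i $ i"]
    by (simp add: is_diagonal_eq_diag_mat[OF C, symmetric] divide_inverse)
  show ?thesis
    using posterior_covariance_mult_information[OF S V_inv invertible_matrix_inv(1)[OF \<Sigma>(2)]]
    unfolding info .
qed

lemma information_matrix_bounds:
  fixes \<Sigma> :: "real^'n^'n"
  assumes sym: "symmetric_mat \<Sigma>" and lam: "0 < lam" and \<Sigma>: "\<And>x. lam * (norm x)\<^sup>2 \<le> x \<bullet> (\<Sigma> *v x)"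
    and d: "\<And>i. c \<le> d i" "\<And>i. d i \<le> r"
  shows "c * (norm x)\<^sup>2 \<le> x \<bullet> ((diag_mat d + matrix_inv \<Sigma>) *v x)"
    "x \<bullet> ((diag_mat d + matrix_inv \<Sigma>) *v x) \<le> (r + 1 / lam) * (norm x)\<^sup>2"
  using quadratic_form_diag_mat_bounds[of c d r x, OF d] quadratic_form_matrix_inv_le[OF sym lam \<Sigma>, of x]
  by (simp_all add: matrix_vector_mult_add_rdistrib inner_add_right distrib_right)

theorem theorem4:
  fixes H W :: "real^'n^'n" and D :: "real^'m^'n"
    and C V \<Sigma> :: "real^'n^'n"
    and sigma :: "'n \<Rightarrow> real" and l u :: 'n
  assumes W_pd: "pd_mat W"
    and C_diag: "is_diagonal C" and C_nz: "\<forall>i. C $ i $ i \<noteq> 0"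
    and sigma_pos: "\<forall>i. sigma i > 0"
    and V_def: "V = diag_mat (\<lambda>i. (sigma i)\<^sup>2)"
    and obs: "observable H C"
    and W_eq: "W = D ** transpose D"
    and ctrb: "controllable H D"
    and Sigma_psd: "psd_mat \<Sigma>"
    and DARE: "\<Sigma> = H ** \<Sigma> ** transpose H
        - H ** \<Sigma> ** transpose C ** matrix_inv (C ** \<Sigma> ** transpose C + V) ** C ** \<Sigma> ** transpose H
        + W"
    and l_min: "\<forall>i. (C $ l $ l)\<^sup>2 / (sigma l)\<^sup>2 \<le> (C $ i $ i)\<^sup>2 / (sigma i)\<^sup>2"
    and u_max: "\<forall>i. (C $ i $ i)\<^sup>2 / (sigma i)\<^sup>2 \<le> (C $ u $ u)\<^sup>2 / (sigma u)\<^sup>2"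
  shows "let \<Sigma>bar = \<Sigma> - \<Sigma> ** transpose C ** matrix_inv (C ** \<Sigma> ** transpose C + V) ** C ** \<Sigma>
         in real CARD('n) * ln ((sigma u)\<^sup>2 / ((C $ u $ u)\<^sup>2 + (sigma u)\<^sup>2 * inverse (lambda_min W)))
              \<le> ln (det \<Sigma>bar)
          \<and> ln (det \<Sigma>bar) \<le> real CARD('n) * ln ((sigma l)\<^sup>2 / (C $ l $ l)\<^sup>2)"
proof -
  define lam where "lam = lambda_min W"
  define snr where "snr i = (C $ i $ i)\<^sup>2 / (sigma i)\<^sup>2" for i
  define \<Sigma>bar where "\<Sigma>bar = \<Sigma> - \<Sigma> ** transpose C ** matrix_inv (C ** \<Sigma> ** transpose C + V) ** C ** \<Sigma>"
  have V_pd: "pd_mat V" unfolding V_def using sigma_pos by (intro pd_diag_mat) (metis less_irrefl zero_less_power2)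
  have lam: "0 < lam" unfolding lam_def using W_pd by (rule lambda_min_pos)
  have \<Sigma>_sym: "symmetric_mat \<Sigma>" using Sigma_psd by (simp add: psd_mat_def)
  have \<Sigma>_lo: "lam * (norm x)\<^sup>2 \<le> x \<bullet> (\<Sigma> *v x)" for x
    using lambda_min_le_quadratic_form[of W x] W_pd riccati_solution_ge_process_noise[OF Sigma_psd V_pd DARE, of x]
    by (simp add: lam_def pd_mat_def)
  have \<Sigma>_inv: "invertible \<Sigma>"
    using pd_mat_of_quadratic_form_ge[OF \<Sigma>_sym lam \<Sigma>_lo] by (rule pd_mat_invertible)
  have "\<Sigma>bar ** (diag_mat snr + matrix_inv \<Sigma>) = mat 1"
    using posterior_covariance_diagonal_information[OF Sigma_psd \<Sigma>_inv C_diag] sigma_pos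
    by (simp add: \<Sigma>bar_def snr_def[abs_def] V_def)
  moreover have "symmetric_mat (diag_mat snr + matrix_inv \<Sigma>)"
    using symmetric_diag_mat symmetric_mat_matrix_inv[OF \<Sigma>_sym \<Sigma>_inv] by (rule symmetric_mat_add)
  moreover have "0 < snr l" using C_nz sigma_pos[rule_format, of l] by (simp add: snr_def)
  moreover have "\<And>i. snr l \<le> snr i" "\<And>i. snr i \<le> snr u"
    using l_min u_max by (simp_all add: snr_def)
  note information_matrix_bounds[OF \<Sigma>_sym lam \<Sigma>_lo, of "snr l" snr "snr u", OF this]
  ultimately have "real CARD('n) * ln (inverse (snr u + 1 / lam)) \<le> ln (det \<Sigma>bar)"
      "ln (det \<Sigma>bar) \<le> real CARD('n) * ln (inverse (snr l))"
    by (rule ln_det_bounds_of_inverse)+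
  moreover have "inverse (snr u + 1 / lam) = (sigma u)\<^sup>2 / ((C $ u $ u)\<^sup>2 + (sigma u)\<^sup>2 * inverse lam)"
    using sigma_pos[rule_format, of u] by (simp add: snr_def field_simps)
  ultimately show ?thesis by (simp add: Let_def \<Sigma>bar_def lam_def snr_def)
qed

end
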